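(* Let $m\ge0$ and $n\ge0$ be integers. Then the polynomial $\sum_{j=0}^n(-1)^jq^{mj}\begin{bmatrix} n\\ j\end{bmatrix}_{q^2}$ is divisible by $(q;q^2)_{\lfloor (n+1)/2\rfloor}$ in $\mathbb{Z}[q]$.
   Context: $q$ is an indeterminate. $(x;q)_n=\prod_{j=0}^{n-1}(1-q^jx)$. The Gaussian binomial coefficient is $\begin{bmatrix} n\\ j\end{bmatrix}_q=\frac{(q;q)_n}{(q;q)_j(q;q)_{n-j}}$ for $0\le j\le n$ (a polynomial in $q$), and $\begin{bmatrix} n\\ j\end{bmatrix}_{q^2}$ is this with $q$ replaced by $q^2$. *)

theory Defs
  imports "HOL-Computational_Algebra.Polynomial"
begin

definition qvar :: "int poly" where "qvar = [:0, 1:]"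

definition qpoch :: "int poly \<Rightarrow> int poly \<Rightarrow> nat \<Rightarrow> int poly" where
  "qpoch x b n = (\<Prod>j<n. 1 - b ^ j * x)"

text \<open>Gaussian binomial coefficient [n,j]_q = (q;q)_n / ((q;q)_j (q;q)_(n-j)),
  an (exact) quotient in Z[q].\<close>
definition qbinom :: "nat \<Rightarrow> nat \<Rightarrow> int poly" where
  "qbinom n j = qpoch qvar qvar n div (qpoch qvar qvar j * qpoch qvar qvar (n - j))"

definition qbinom2 :: "nat \<Rightarrow> nat \<Rightarrow> int poly" where
  "qbinom2 n j = pcompose (qbinom n j) (qvar ^ 2)"

end

theory Submission
  imports Defs
begin

text \<open>Write S(x, n) = sum_j (-1)^j x^j [n, j]_Q with Q = q^2. Pascal's rule gives
  S(Qx, n) = S(x, n+1) + x S(x, n), which reduces x = q^m to x = q^(m-2) at the price of n+1,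
  while the divisor (q;q^2)_floor((n+1)/2) only grows with n. The absorption identity
  (1 - Q^(k+1)) [n+1, k+1] = (1 - Q^(n+1)) [n, k] yields the three-term recursion
  S(x, n+2) = (1 - x) S(x, n+1) + x (1 - Q^(n+1)) S(x, n), which settles the base cases in
  closed form. For x = 1 (Gauss) S vanishes at odd n and equals prod_(i<k) (1 - q^(4i+2)) at
  n = 2k, each factor being divisible by 1 - q^(2i+1); for x = q it equals
  (q;q^2)_floor((n+1)/2) * prod_(i < floor(n/2)) (1 + q^(2i+2)).\<close>

text \<open>Gaussian binomials via Pascal's rule, so that they live in any commutative ring; the
  quotient definition of \<open>qbinom\<close> is recovered from \<open>gauss_binomial_mult_qfact\<close>.\<close>

fun gauss_binomial :: "'a::comm_ring_1 \<Rightarrow> nat \<Rightarrow> nat \<Rightarrow> 'a" where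
  "gauss_binomial Q 0 k = (if k = 0 then 1 else 0)"
| "gauss_binomial Q (Suc n) 0 = 1"
| "gauss_binomial Q (Suc n) (Suc k) =
     gauss_binomial Q n k + Q ^ Suc k * gauss_binomial Q n (Suc k)"

definition qfact :: "'a::comm_ring_1 \<Rightarrow> nat \<Rightarrow> 'a" where
  "qfact Q n = (\<Prod>i<n. 1 - Q ^ Suc i)"

lemma qfact_Suc: "qfact Q (Suc n) = qfact Q n * (1 - Q ^ Suc n)"
  by (simp add: qfact_def)

lemma qfact_nonzero:
  fixes Q :: "'a::idom"
  assumes "\<And>i. 1 - Q ^ Suc i \<noteq> 0"
  shows "qfact Q n \<noteq> 0"
  using assms by (simp add: qfact_def)

lemma gauss_binomial_0_right [simp]: "gauss_binomial Q n 0 = 1"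
  by (cases n) simp_all

lemma gauss_binomial_eq_0: "n < k \<Longrightarrow> gauss_binomial Q n k = 0"
  by (induction Q n k rule: gauss_binomial.induct) auto

lemma gauss_binomial_mult_qfact:
  "k \<le> n \<Longrightarrow> gauss_binomial Q n k * (qfact Q k * qfact Q (n - k)) = qfact Q n"
proof (induction n arbitrary: k)
  case 0
  then show ?case by (simp add: qfact_def)
next
  case (Suc n)
  show ?case
  proof (cases k)
    case 0
    then show ?thesis by (simp add: qfact_def)
  next
    case (Suc j)
    have left: "gauss_binomial Q n j * (qfact Q (Suc j) * qfact Q (n - j))
        = qfact Q n * (1 - Q ^ Suc j)"
      using Suc.IH[of j] Suc Suc.prems by (simp add: qfact_Suc algebra_simps)
    have right: "Q ^ Suc j * gauss_binomial Q n (Suc j) * (qfact Q (Suc j) * qfact Q (n - j))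
        = qfact Q n * (Q ^ Suc j - Q ^ Suc n)"
    proof (cases "j < n")
      case True
      have nj: "n - j = Suc (n - Suc j)" using True by simp
      have "Q ^ Suc j * gauss_binomial Q n (Suc j) * (qfact Q (Suc j) * qfact Q (n - j))
          = Q ^ Suc j * (1 - Q ^ (n - j))
            * (gauss_binomial Q n (Suc j) * (qfact Q (Suc j) * qfact Q (n - Suc j)))"
        unfolding nj qfact_Suc[of Q "n - Suc j"] by (simp add: algebra_simps)
      also have "\<dots> = Q ^ Suc j * (1 - Q ^ (n - j)) * qfact Q n"
        using Suc.IH[of "Suc j"] True by simp
      also have "Q ^ Suc j * (1 - Q ^ (n - j)) = Q ^ Suc j - Q ^ Suc n"
        using True by (simp add: algebra_simps flip: power_add)
      finally show ?thesis by (simp add: algebra_simps)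
    next
      case False
      then show ?thesis using Suc.prems Suc by (simp add: gauss_binomial_eq_0)
    qed
    have "gauss_binomial Q (Suc n) k * (qfact Q k * qfact Q (Suc n - k))
        = gauss_binomial Q n j * (qfact Q (Suc j) * qfact Q (n - j))
          + Q ^ Suc j * gauss_binomial Q n (Suc j) * (qfact Q (Suc j) * qfact Q (n - j))"
      using Suc by (simp add: distrib_right)
    also have "\<dots> = qfact Q n * (1 - Q ^ Suc n)"
      unfolding left right by (simp add: algebra_simps)
    finally show ?thesis by (simp add: qfact_Suc)
  qed
qed

lemma gauss_binomial_absorb:
  fixes Q :: "'a::idom"
  assumes nz: "\<And>i. 1 - Q ^ Suc i \<noteq> 0"
  shows "(1 - Q ^ Suc k) * gauss_binomial Q (Suc n) (Suc k) = (1 - Q ^ Suc n) * gauss_binomial Q n k"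
proof (cases "k \<le> n")
  case True
  have "(1 - Q ^ Suc k) * gauss_binomial Q (Suc n) (Suc k) * (qfact Q k * qfact Q (n - k))
      = qfact Q (Suc n)"
    using gauss_binomial_mult_qfact[of "Suc k" "Suc n" Q] True
    by (simp add: qfact_Suc algebra_simps)
  also have "\<dots> = (1 - Q ^ Suc n) * gauss_binomial Q n k * (qfact Q k * qfact Q (n - k))"
    using gauss_binomial_mult_qfact[OF True, of Q] by (simp add: qfact_Suc algebra_simps)
  finally show ?thesis
    using qfact_nonzero[OF nz] by simp
qed (simp add: gauss_binomial_eq_0)

lemma pcompose_power: "pcompose (p ^ k) r = pcompose p r ^ k"
  by (induction k) (simp_all add: pcompose_1 pcompose_mult)

lemma pcompose_gauss_binomial:
  "pcompose (gauss_binomial Q n k) r = gauss_binomial (pcompose Q r) n k"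
  by (induction Q n k rule: gauss_binomial.induct)
    (simp_all add: pcompose_1 pcompose_add pcompose_mult pcompose_power)

definition gauss_alt_sum :: "'a::comm_ring_1 \<Rightarrow> 'a \<Rightarrow> nat \<Rightarrow> 'a" where
  "gauss_alt_sum Q x n = (\<Sum>j\<le>n. (-1) ^ j * x ^ j * gauss_binomial Q n j)"

lemma gauss_alt_sum_extend:
  "n \<le> N \<Longrightarrow> gauss_alt_sum Q x n = (\<Sum>j\<le>N. (-1) ^ j * x ^ j * gauss_binomial Q n j)"
  unfolding gauss_alt_sum_def by (rule sum.mono_neutral_left) (auto simp: gauss_binomial_eq_0)

lemma gauss_alt_sum_Suc:
  "gauss_alt_sum Q x (Suc n) = gauss_alt_sum Q (Q * x) n - x * gauss_alt_sum Q x n"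
proof -
  have "gauss_alt_sum Q x (Suc n)
      = 1 + (\<Sum>j\<le>n. (-1) ^ Suc j * x ^ Suc j * gauss_binomial Q (Suc n) (Suc j))"
    unfolding gauss_alt_sum_def by (subst sum.atMost_Suc_shift) simp
  also have "\<dots> = 1 + (\<Sum>j\<le>n. (-1) ^ Suc j * (Q * x) ^ Suc j * gauss_binomial Q n (Suc j))
      - x * gauss_alt_sum Q x n"
    unfolding gauss_alt_sum_def
    by (simp add: sum_distrib_left sum.distrib[symmetric] sum_subtractf[symmetric]
        algebra_simps)
  also have "1 + (\<Sum>j\<le>n. (-1) ^ Suc j * (Q * x) ^ Suc j * gauss_binomial Q n (Suc j))
      = (\<Sum>j\<le>Suc n. (-1) ^ j * (Q * x) ^ j * gauss_binomial Q n j)"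
    by (subst sum.atMost_Suc_shift) simp
  also have "\<dots> = gauss_alt_sum Q (Q * x) n"
    by (rule gauss_alt_sum_extend[symmetric]) simp
  finally show ?thesis .
qed

lemma gauss_alt_sum_Suc_Suc:
  fixes Q :: "'a::idom"
  assumes nz: "\<And>i. 1 - Q ^ Suc i \<noteq> 0"
  shows "gauss_alt_sum Q x (Suc (Suc n))
    = (1 - x) * gauss_alt_sum Q x (Suc n) + x * (1 - Q ^ Suc n) * gauss_alt_sum Q x n"
proof -
  let ?A = "\<lambda>j. (-1) ^ Suc j * x ^ Suc j * gauss_binomial Q (Suc n) (Suc j)"
  let ?B = "\<lambda>j. (-1) ^ j * x ^ j * gauss_binomial Q (Suc n) j"
  let ?C = "\<lambda>j. (-1) ^ j * x ^ j * gauss_binomial Q n j"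
  have pascal: "gauss_binomial Q (Suc (Suc n)) (Suc j) = gauss_binomial Q (Suc n) (Suc j)
      + gauss_binomial Q (Suc n) j - (1 - Q ^ Suc n) * gauss_binomial Q n j" for j
    using gauss_binomial_absorb[OF nz, of j n] by (simp add: algebra_simps)
  have "gauss_alt_sum Q x (Suc (Suc n))
      = 1 + (\<Sum>j\<le>Suc n. (-1) ^ Suc j * x ^ Suc j * gauss_binomial Q (Suc (Suc n)) (Suc j))"
    unfolding gauss_alt_sum_def by (subst sum.atMost_Suc_shift) simp
  also have "\<dots> = 1 + (\<Sum>j\<le>Suc n. ?A j - x * ?B j + x * (1 - Q ^ Suc n) * ?C j)"
    by (intro arg_cong[where f = "\<lambda>s. 1 + s"] sum.cong refl)
      (simp only: pascal, simp add: algebra_simps)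
  also have "\<dots> = (1 + (\<Sum>j\<le>Suc n. ?A j)) - x * (\<Sum>j\<le>Suc n. ?B j)
      + x * (1 - Q ^ Suc n) * (\<Sum>j\<le>Suc n. ?C j)"
    by (simp only: sum.distrib sum_subtractf sum_distrib_left add_diff_eq diff_add_eq add.assoc)
  also have "1 + (\<Sum>j\<le>Suc n. ?A j) = (\<Sum>j\<le>Suc (Suc n). ?B j)"
    by (subst sum.atMost_Suc_shift) simp
  also have "\<dots> = gauss_alt_sum Q x (Suc n)"
    by (rule gauss_alt_sum_extend[symmetric]) simp
  also have "(\<Sum>j\<le>Suc n. ?B j) = gauss_alt_sum Q x (Suc n)"
    unfolding gauss_alt_sum_def ..
  also have "(\<Sum>j\<le>Suc n. ?C j) = gauss_alt_sum Q x n"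
    by (rule gauss_alt_sum_extend[symmetric]) simp
  finally show ?thesis by (simp add: algebra_simps)
qed

lemma gauss_alt_sum_0 [simp]: "gauss_alt_sum Q x 0 = 1"
  by (simp add: gauss_alt_sum_def)

lemma gauss_alt_sum_1 [simp]: "gauss_alt_sum Q x (Suc 0) = 1 - x"
  by (simp add: gauss_alt_sum_def)

lemma gauss_alt_sum_at_1:
  fixes Q :: "'a::idom"
  assumes nz: "\<And>i. 1 - Q ^ Suc i \<noteq> 0"
  shows "gauss_alt_sum Q 1 (2 * k) = (\<Prod>i<k. 1 - Q ^ (2 * i + 1))"
    and "gauss_alt_sum Q 1 (2 * k + 1) = 0"
proof -
  have "gauss_alt_sum Q 1 (2 * k) = (\<Prod>i<k. 1 - Q ^ (2 * i + 1))
      \<and> gauss_alt_sum Q 1 (2 * k + 1) = 0"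
  proof (induction k)
    case (Suc k)
    then show ?case
      using gauss_alt_sum_Suc_Suc[OF nz, of 1 "2 * k"] gauss_alt_sum_Suc_Suc[OF nz, of 1 "2 * k + 1"]
      by (simp add: mult.commute)
  qed simp
  then show "gauss_alt_sum Q 1 (2 * k) = (\<Prod>i<k. 1 - Q ^ (2 * i + 1))"
    and "gauss_alt_sum Q 1 (2 * k + 1) = 0" by simp_all
qed

definition odd_qpoch :: "'a::comm_ring_1 \<Rightarrow> nat \<Rightarrow> 'a" where
  "odd_qpoch q k = (\<Prod>i<k. 1 - q ^ (2 * i + 1))"

lemma odd_qpoch_Suc: "odd_qpoch q (Suc k) = odd_qpoch q k * (1 - q ^ (2 * k + 1))"
  by (simp add: odd_qpoch_def)

lemma odd_qpoch_dvd_odd_qpoch: "k \<le> l \<Longrightarrow> odd_qpoch q k dvd odd_qpoch q l"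
  unfolding odd_qpoch_def by (rule prod_dvd_prod_subset) auto

lemma odd_qpoch_dvd_gauss_alt_sum_at_1:
  fixes q :: "'a::idom"
  assumes nz: "\<And>i. 1 - (q ^ 2) ^ Suc i \<noteq> 0"
  shows "odd_qpoch q ((n + 1) div 2) dvd gauss_alt_sum (q ^ 2) 1 n"
proof -
  have "\<exists>k. n = 2 * k \<or> n = 2 * k + 1" by presburger
  then obtain k where "n = 2 * k \<or> n = 2 * k + 1" by blast
  moreover have "odd_qpoch q k dvd (\<Prod>i<k. 1 - (q ^ 2) ^ (2 * i + 1))"
    unfolding odd_qpoch_def
  proof (rule prod_dvd_prod)
    fix i
    have "1 - (q ^ 2) ^ (2 * i + 1) = (1 - q ^ (2 * i + 1)) * (1 + q ^ (2 * i + 1))"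
      by (simp add: algebra_simps power2_eq_square flip: power_mult power_add)
    then show "1 - q ^ (2 * i + 1) dvd 1 - (q ^ 2) ^ (2 * i + 1)" by simp
  qed
  ultimately show ?thesis
    using gauss_alt_sum_at_1[OF nz] by auto
qed

lemma gauss_alt_sum_at_q:
  fixes q :: "'a::idom"
  assumes nz: "\<And>i. 1 - (q ^ 2) ^ Suc i \<noteq> 0"
  defines "E k \<equiv> \<Prod>i<k. 1 + q ^ (2 * i + 2)"
  shows "gauss_alt_sum (q ^ 2) q (2 * k) = odd_qpoch q k * E k"
    and "gauss_alt_sum (q ^ 2) q (2 * k + 1) = odd_qpoch q (Suc k) * E k"
proof -
  have E_Suc: "E (Suc k) = E k * (1 + q ^ (2 * k + 2))" for k
    by (simp add: E_def)
  have "gauss_alt_sum (q ^ 2) q (2 * k) = odd_qpoch q k * E k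
      \<and> gauss_alt_sum (q ^ 2) q (2 * k + 1) = odd_qpoch q (Suc k) * E k"
  proof (induction k)
    case 0
    then show ?case by (simp add: odd_qpoch_def E_def)
  next
    case (Suc k)
    define y where "y = q ^ (2 * k + 1)"
    define z where "z = q ^ (2 * k + 2)"
    have sq: "(q ^ 2) ^ Suc (2 * k) = y ^ 2" "(q ^ 2) ^ Suc (Suc (2 * k)) = z ^ 2"
      unfolding y_def z_def power_mult[symmetric] by (simp_all add: mult.commute)
    have z: "z = q * y" "q * z = q ^ (2 * Suc k + 1)"
      by (simp_all add: y_def z_def)
    have IH_even: "gauss_alt_sum (q ^ 2) q (2 * k) = odd_qpoch q k * E k"
      and IH_odd: "gauss_alt_sum (q ^ 2) q (Suc (2 * k)) = odd_qpoch q k * (1 - y) * E k"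
      using Suc.IH by (simp_all add: odd_qpoch_Suc y_def)
    have even: "gauss_alt_sum (q ^ 2) q (Suc (Suc (2 * k))) = odd_qpoch q (Suc k) * E (Suc k)"
    proof -
      have "gauss_alt_sum (q ^ 2) q (Suc (Suc (2 * k)))
          = (1 - q) * (odd_qpoch q k * (1 - y) * E k) + q * (1 - y ^ 2) * (odd_qpoch q k * E k)"
        using gauss_alt_sum_Suc_Suc[OF nz, of q "2 * k"] unfolding sq IH_even IH_odd .
      also have "\<dots> = odd_qpoch q k * (1 - y) * (E k * (1 + z))"
        unfolding z by (simp add: algebra_simps power2_eq_square)
      finally show ?thesis by (simp add: odd_qpoch_Suc E_Suc y_def z_def)
    qed
    have "gauss_alt_sum (q ^ 2) q (Suc (Suc (Suc (2 * k))))
        = (1 - q) * (odd_qpoch q (Suc k) * E (Suc k))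
          + q * (1 - z ^ 2) * (odd_qpoch q (Suc k) * E k)"
      using gauss_alt_sum_Suc_Suc[OF nz, of q "Suc (2 * k)"] Suc.IH
      unfolding sq even by simp
    also have "\<dots> = odd_qpoch q (Suc k) * (1 - q * z) * (E k * (1 + z))"
      by (simp add: E_Suc z_def algebra_simps power2_eq_square)
    finally have odd: "gauss_alt_sum (q ^ 2) q (2 * Suc k + 1) = odd_qpoch q (Suc (Suc k)) * E (Suc k)"
      unfolding odd_qpoch_Suc[of q "Suc k"] E_Suc z(2)[symmetric] z_def[symmetric]
      by (simp add: mult.assoc)
    from even odd show ?case by simp
  qed
  then show "gauss_alt_sum (q ^ 2) q (2 * k) = odd_qpoch q k * E k"
    and "gauss_alt_sum (q ^ 2) q (2 * k + 1) = odd_qpoch q (Suc k) * E k" by simp_all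
qed

lemma odd_qpoch_dvd_gauss_alt_sum:
  fixes q :: "'a::idom"
  assumes nz: "\<And>i. 1 - (q ^ 2) ^ Suc i \<noteq> 0"
  shows "odd_qpoch q ((n + 1) div 2) dvd gauss_alt_sum (q ^ 2) (q ^ m) n"
proof (induction m arbitrary: n rule: less_induct)
  case (less m)
  consider "m = 0" | "m = 1" | m' where "m = m' + 2"
    by (metis One_nat_def add_2_eq_Suc' not0_implies_Suc)
  then show ?case
  proof cases
    case 1
    then show ?thesis using odd_qpoch_dvd_gauss_alt_sum_at_1[OF nz] by simp
  next
    case 2
    have "\<exists>k. n = 2 * k \<or> n = 2 * k + 1" by presburger
    then obtain k where "n = 2 * k \<or> n = 2 * k + 1" by blast
    then show ?thesis
      using \<open>m = 1\<close> gauss_alt_sum_at_q[OF nz, of k] by (auto simp: odd_qpoch_Suc)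
  next
    case 3
    have "q ^ m = q ^ 2 * q ^ m'"
      using 3 by (simp add: power_add power2_eq_square mult.commute)
    then have "gauss_alt_sum (q ^ 2) (q ^ m) n
        = gauss_alt_sum (q ^ 2) (q ^ m') (Suc n) + q ^ m' * gauss_alt_sum (q ^ 2) (q ^ m') n"
      using gauss_alt_sum_Suc[of "q ^ 2" "q ^ m'" n] by (simp add: eq_diff_eq)
    moreover have "odd_qpoch q ((n + 1) div 2) dvd gauss_alt_sum (q ^ 2) (q ^ m') (Suc n)"
    proof (rule dvd_trans)
      show "odd_qpoch q ((n + 1) div 2) dvd odd_qpoch q ((Suc n + 1) div 2)"
        by (rule odd_qpoch_dvd_odd_qpoch) simp
      show "odd_qpoch q ((Suc n + 1) div 2) dvd gauss_alt_sum (q ^ 2) (q ^ m') (Suc n)"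
        using less.IH[of m' "Suc n"] 3 by simp
    qed
    moreover have "odd_qpoch q ((n + 1) div 2) dvd gauss_alt_sum (q ^ 2) (q ^ m') n"
      using less.IH[of m' n] 3 by simp
    ultimately show ?thesis by simp
  qed
qed

lemma one_minus_qvar_power_nonzero: "0 < k \<Longrightarrow> 1 - qvar ^ k \<noteq> 0"
proof
  assume "0 < k" and "1 - qvar ^ k = 0"
  then have "poly (1 - qvar ^ k) 2 = (0::int)" by simp
  moreover have "poly (1 - qvar ^ k) 2 = 1 - (2::int) ^ k" by (simp add: qvar_def)
  moreover have "(1::int) < 2 ^ k" using \<open>0 < k\<close> by simp
  ultimately show False by simp
qed

lemma qbinom2_eq_gauss_binomial:
  assumes "j \<le> n"
  shows "qbinom2 n j = gauss_binomial (qvar ^ 2) n j"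
proof -
  have qpoch_eq_qfact: "qpoch qvar qvar k = qfact qvar k" for k
    unfolding qpoch_def qfact_def by (simp add: mult.commute)
  have nz: "1 - qvar ^ Suc i \<noteq> 0" for i
    by (rule one_minus_qvar_power_nonzero) simp
  have "qfact qvar j * qfact qvar (n - j) \<noteq> 0"
    using qfact_nonzero[OF nz] by simp
  then have "qbinom n j = gauss_binomial qvar n j"
    unfolding qbinom_def qpoch_eq_qfact
    using gauss_binomial_mult_qfact[OF assms, of qvar] by (metis nonzero_mult_div_cancel_right)
  then show ?thesis
    unfolding qbinom2_def by (simp add: pcompose_gauss_binomial qvar_def pcompose_pCons)
qed

lemma qpoch_qvar_eq_odd_qpoch: "qpoch qvar (qvar ^ 2) k = odd_qpoch qvar k"
  unfolding qpoch_def odd_qpoch_def by (simp add: power_mult[symmetric] power_add mult.commute)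

theorem corollary2p3:
  fixes m n :: nat
  shows "qpoch qvar (qvar ^ 2) ((n + 1) div 2) dvd
           (\<Sum>j\<le>n. (-1) ^ j * qvar ^ (m * j) * qbinom2 n j)"
proof -
  have "(\<Sum>j\<le>n. (-1) ^ j * qvar ^ (m * j) * qbinom2 n j) = gauss_alt_sum (qvar ^ 2) (qvar ^ m) n"
    unfolding gauss_alt_sum_def by (intro sum.cong refl) (simp add: qbinom2_eq_gauss_binomial power_mult)
  moreover have nz: "1 - (qvar ^ 2) ^ Suc i \<noteq> 0" for i
    using one_minus_qvar_power_nonzero[of "2 * Suc i"] by (simp only: power_mult) simp
  ultimately show ?thesis
    using odd_qpoch_dvd_gauss_alt_sum[OF nz, of n m] by (simp add: qpoch_qvar_eq_odd_qpoch)
qed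

end
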